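(* Let $\mathscr{V}$ be a braided monoidal category, $A$ a monoid and $B$ a bimonoid in $\mathscr{V}$, regarded as a comonoid $(B,\delta_B,\varepsilon_B)$ in the monoidal 2-category $\mathrm{Mon}\mathscr{V}$. A pair $(\gamma,\tau)$, with $\gamma\colon A\to A\otimes B$ and $\tau\colon I\to A\otimes B\otimes B$ morphisms of $\mathscr{V}$, is a twisted right coaction of $B$ on $A$ if and only if it is a normal lax right coaction of the comonoid $B$ on the object $A$ in $\mathrm{Mon}\mathscr{V}$.
   Context: Associativity and unit constraints are suppressed; $c$ is the braiding. For monoids $M,N$, $M\otimes N$ is a monoid with multiplication $(\mu_M\otimes\mu_N)\circ(1_M\otimes c_{N,M}\otimes 1_N)$ and unit $\eta_M\otimes\eta_N$. For a monoid $M$ and $u\colon X\to M$, $v\colon Y\to M$, $u\bullet v=\mu_M\circ(u\otimes v)$. A bimonoid is a monoid and comonoid whose comultiplication and counit are monoid morphisms. The 2-category $\mathrm{Mon}\mathscr{V}$: objects are monoids in $\mathscr{V}$, 1-cells are monoid morphisms, and a 2-cell $\xi\colon f\Rightarrow g$ between $f,g\colon M\to N$ is a morphism $\xi\colon I\to N$ with $\xi\bullet f=g\bullet\xi$ (as morphisms $M\to N$). Vertical composite of $\xi$ followed by $\zeta\colon g\Rightarrow h$ is $\zeta\bullet\xi$; the identity 2-cell on $f\colon M\to N$ is $\eta_N$; whiskering $\xi$ by a 1-cell $h\colon N\to L$ on the codomain side gives $h\circ\xi$, and whiskering by a 1-cell $k\colon L\to M$ on the domain side gives $\xi$. It is monoidal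 via the tensor product of monoids above, $f\otimes g$ on 1-cells and $\xi\otimes\xi'$ on 2-cells. A twisted right coaction of $B$ on $A$: a monoid morphism $\gamma\colon A\to A\otimes B$ and $\tau\colon I\to A\otimes B\otimes B$ with (counitality) $(1_A\otimes\varepsilon_B)\circ\gamma=1_A$; ($\tau$-coassociativity) $\tau\bullet((\gamma\otimes 1_B)\circ\gamma)=((1_A\otimes\delta_B)\circ\gamma)\bullet\tau$; (2-cocyclicity) $((1_A\otimes\delta_B\otimes 1_B)\circ\tau)\bullet(\tau\otimes\eta_B)=((1_{A\otimes B}\otimes\delta_B)\circ\tau)\bullet((\gamma\otimes 1_{B\otimes B})\circ\tau)$; (normality) $(1_{A\otimes B}\otimes\varepsilon_B)\circ\tau=\eta_A\otimes\eta_B=(1_A\otimes\varepsilon_B\otimes 1_B)\circ\tau$. A normal lax right coaction of a comonoid $(B,\delta,\varepsilon)$ on an object $A$ in a monoidal 2-category consists of a 1-cell $\gamma\colon A\to A\otimes B$ with $(1_A\otimes\varepsilon)\circ\gamma=1_A$ (the unit constraint 2-cell being an identity), and a 2-cell $\tau\colon(\gamma\otimes 1_B)\circ\gamma\Rightarrow(1_A\otimes\delta)\circ\gamma$, such that the two composite 2-cells $(\gamma\otimes 1_B\otimes 1_B)(\gamma\otimes 1_B)\gamma\Rightarrow(1_A\otimes\delta\otimes 1_B)(1_A\otimes\delta)\gamma=(1_A\otimes 1_B\otimes\delta)(1_A\otimes\delta)\gamma$, namely $(1_A\otimes\delta\otimes 1_B)\tau$ after $(\tau\otimes 1_B)\gamma$,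 and $(1_A\otimes 1_B\otimes\delta)\tau$ after $(\gamma\otimes 1_B\otimes 1_B)\tau$, are equal, and such that the whiskered 2-cells $(1_A\otimes\varepsilon\otimes 1_B)\tau$ and $(1_A\otimes 1_B\otimes\varepsilon)\tau$ are identity 2-cells of $\gamma$. *)

theory Defs
  imports Main
begin

section \<open>Strict braided monoidal categories (associativity and unit constraints suppressed)\<close>

text \<open>Every element of type 'm is a morphism; src/tgt give domain and codomain;
  cmp f g is "f after g" (meaningful when tgt g = src f).\<close>

record ('o,'m) bmcat =
  src :: "'m \<Rightarrow> 'o"
  tgt :: "'m \<Rightarrow> 'o"
  idm :: "'o \<Rightarrow> 'm"
  cmp :: "'m \<Rightarrow> 'm \<Rightarrow> 'm"
  tob :: "'o \<Rightarrow> 'o \<Rightarrow> 'o"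
  tmr :: "'m \<Rightarrow> 'm \<Rightarrow> 'm"
  unt :: "'o"
  brd :: "'o \<Rightarrow> 'o \<Rightarrow> 'm"

definition is_bmc :: "('o,'m) bmcat \<Rightarrow> bool" where
  "is_bmc C \<longleftrightarrow>
    (\<forall>a. src C (idm C a) = a \<and> tgt C (idm C a) = a) \<and>
    (\<forall>f g. tgt C g = src C f \<longrightarrow> src C (cmp C f g) = src C g \<and> tgt C (cmp C f g) = tgt C f) \<and>
    (\<forall>f. cmp C f (idm C (src C f)) = f \<and> cmp C (idm C (tgt C f)) f = f) \<and>
    (\<forall>f g h. tgt C h = src C g \<and> tgt C g = src C f \<longrightarrow>
        cmp C (cmp C f g) h = cmp C f (cmp C g h)) \<and>
    (\<forall>f g. src C (tmr C f g) = tob C (src C f) (src C g) \<and> tgt C (tmr C f g) = tob C (tgt C f) (tgt C g)) \<and>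
    (\<forall>a b. tmr C (idm C a) (idm C b) = idm C (tob C a b)) \<and>
    (\<forall>f f' g g'. tgt C f = src C f' \<and> tgt C g = src C g' \<longrightarrow>
        tmr C (cmp C f' f) (cmp C g' g) = cmp C (tmr C f' g') (tmr C f g)) \<and>
    (\<forall>a b c. tob C (tob C a b) c = tob C a (tob C b c)) \<and>
    (\<forall>a. tob C (unt C) a = a \<and> tob C a (unt C) = a) \<and>
    (\<forall>f g h. tmr C (tmr C f g) h = tmr C f (tmr C g h)) \<and>
    (\<forall>f. tmr C (idm C (unt C)) f = f \<and> tmr C f (idm C (unt C)) = f) \<and>
    (\<forall>a b. src C (brd C a b) = tob C a b \<and> tgt C (brd C a b) = tob C b a \<and>
        (\<exists>g. src C g = tob C b a \<and> tgt C g = tob C a b \<and>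
             cmp C g (brd C a b) = idm C (tob C a b) \<and> cmp C (brd C a b) g = idm C (tob C b a))) \<and>
    (\<forall>f g. cmp C (brd C (tgt C f) (tgt C g)) (tmr C f g) = cmp C (tmr C g f) (brd C (src C f) (src C g))) \<and>
    (\<forall>a b d. brd C a (tob C b d) = cmp C (tmr C (idm C b) (brd C a d)) (tmr C (brd C a b) (idm C d)) \<and>
             brd C (tob C a b) d = cmp C (tmr C (brd C a d) (idm C b)) (tmr C (idm C a) (brd C b d)))"

type_synonym ('o,'m) mon = "'o \<times> 'm \<times> 'm"

definition mcar :: "('o,'m) mon \<Rightarrow> 'o" where "mcar X = fst X"
definition mmul :: "('o,'m) mon \<Rightarrow> 'm" where "mmul X = fst (snd X)"
definition meta :: "('o,'m) mon \<Rightarrow> 'm" where "meta X = snd (snd X)"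

definition is_monoid :: "('o,'m) bmcat \<Rightarrow> ('o,'m) mon \<Rightarrow> bool" where
  "is_monoid C X \<longleftrightarrow> (let M = mcar X; mu = mmul X; eta = meta X in
     src C mu = tob C M M \<and> tgt C mu = M \<and> src C eta = unt C \<and> tgt C eta = M \<and>
     cmp C mu (tmr C mu (idm C M)) = cmp C mu (tmr C (idm C M) mu) \<and>
     cmp C mu (tmr C eta (idm C M)) = idm C M \<and>
     cmp C mu (tmr C (idm C M) eta) = idm C M)"

definition is_comonoid :: "('o,'m) bmcat \<Rightarrow> 'o \<Rightarrow> 'm \<Rightarrow> 'm \<Rightarrow> bool" where
  "is_comonoid C B del eps \<longleftrightarrow>
     src C del = B \<and> tgt C del = tob C B B \<and> src C eps = B \<and> tgt C eps = unt C \<and>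
     cmp C (tmr C del (idm C B)) del = cmp C (tmr C (idm C B) del) del \<and>
     cmp C (tmr C eps (idm C B)) del = idm C B \<and>
     cmp C (tmr C (idm C B) eps) del = idm C B"

definition mten :: "('o,'m) bmcat \<Rightarrow> ('o,'m) mon \<Rightarrow> ('o,'m) mon \<Rightarrow> ('o,'m) mon" where
  "mten C X Y = (tob C (mcar X) (mcar Y),
      cmp C (tmr C (mmul X) (mmul Y))
            (tmr C (tmr C (idm C (mcar X)) (brd C (mcar Y) (mcar X))) (idm C (mcar Y))),
      tmr C (meta X) (meta Y))"

definition munitmon :: "('o,'m) bmcat \<Rightarrow> ('o,'m) mon" where
  "munitmon C = (unt C, idm C (unt C), idm C (unt C))"

definition monoid_hom :: "('o,'m) bmcat \<Rightarrow> ('o,'m) mon \<Rightarrow> ('o,'m) mon \<Rightarrow> 'm \<Rightarrow> bool" where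
  "monoid_hom C X Y f \<longleftrightarrow>
     src C f = mcar X \<and> tgt C f = mcar Y \<and>
     cmp C f (mmul X) = cmp C (mmul Y) (tmr C f f) \<and>
     cmp C f (meta X) = meta Y"

definition is_bimonoid :: "('o,'m) bmcat \<Rightarrow> ('o,'m) mon \<Rightarrow> 'm \<Rightarrow> 'm \<Rightarrow> bool" where
  "is_bimonoid C B del eps \<longleftrightarrow>
     is_monoid C B \<and> is_comonoid C (mcar B) del eps \<and>
     monoid_hom C B (mten C B B) del \<and> monoid_hom C B (munitmon C) eps"

definition bullet :: "('o,'m) bmcat \<Rightarrow> ('o,'m) mon \<Rightarrow> 'm \<Rightarrow> 'm \<Rightarrow> 'm" where
  "bullet C X u v = cmp C (mmul X) (tmr C u v)"

definition twisted_right_coaction ::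
  "('o,'m) bmcat \<Rightarrow> ('o,'m) mon \<Rightarrow> ('o,'m) mon \<Rightarrow> 'm \<Rightarrow> 'm \<Rightarrow> 'm \<Rightarrow> 'm \<Rightarrow> bool" where
  "twisted_right_coaction C A B del eps \<gamma> \<tau> \<longleftrightarrow>
    (let AB = mten C A B; ABB = mten C AB B; ABBB = mten C ABB B;
         iA = idm C (mcar A); iB = idm C (mcar B) in
     monoid_hom C A AB \<gamma> \<and>
     cmp C (tmr C iA eps) \<gamma> = iA \<and>
     bullet C ABB \<tau> (cmp C (tmr C \<gamma> iB) \<gamma>) = bullet C ABB (cmp C (tmr C iA del) \<gamma>) \<tau> \<and>
     bullet C ABBB (cmp C (tmr C (tmr C iA del) iB) \<tau>) (tmr C \<tau> (meta B)) =
       bullet C ABBB (cmp C (tmr C (idm C (tob C (mcar A) (mcar B))) del) \<tau>)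
                     (cmp C (tmr C \<gamma> (idm C (tob C (mcar B) (mcar B)))) \<tau>) \<and>
     cmp C (tmr C (idm C (tob C (mcar A) (mcar B))) eps) \<tau> = tmr C (meta A) (meta B) \<and>
     cmp C (tmr C (tmr C iA eps) iB) \<tau> = tmr C (meta A) (meta B))"

definition mon1cell :: "('o,'m) bmcat \<Rightarrow> ('o,'m) mon \<Rightarrow> ('o,'m) mon \<Rightarrow> 'm \<Rightarrow> bool" where
  "mon1cell C X Y f \<longleftrightarrow> monoid_hom C X Y f"

definition mon2cell :: "('o,'m) bmcat \<Rightarrow> ('o,'m) mon \<Rightarrow> ('o,'m) mon \<Rightarrow> 'm \<Rightarrow> 'm \<Rightarrow> 'm \<Rightarrow> bool" where
  "mon2cell C X Y f g \<xi> \<longleftrightarrow>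
     mon1cell C X Y f \<and> mon1cell C X Y g \<and>
     src C \<xi> = unt C \<and> tgt C \<xi> = mcar Y \<and> bullet C Y \<xi> f = bullet C Y g \<xi>"

definition vcomp2 :: "('o,'m) bmcat \<Rightarrow> ('o,'m) mon \<Rightarrow> 'm \<Rightarrow> 'm \<Rightarrow> 'm" where
  "vcomp2 C Y \<zeta> \<xi> = bullet C Y \<zeta> \<xi>"

definition id2 :: "('o,'m) mon \<Rightarrow> 'm" where
  "id2 Y = meta Y"

definition whisk_cod :: "('o,'m) bmcat \<Rightarrow> 'm \<Rightarrow> 'm \<Rightarrow> 'm" where
  "whisk_cod C h \<xi> = cmp C h \<xi>"

definition whisk_dom :: "'m \<Rightarrow> 'm \<Rightarrow> 'm" where
  "whisk_dom \<xi> k = \<xi>"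

definition tens2 :: "('o,'m) bmcat \<Rightarrow> 'm \<Rightarrow> 'm \<Rightarrow> 'm" where
  "tens2 C \<xi> \<xi>' = tmr C \<xi> \<xi>'"

definition normal_lax_right_coaction_MonV ::
  "('o,'m) bmcat \<Rightarrow> ('o,'m) mon \<Rightarrow> ('o,'m) mon \<Rightarrow> 'm \<Rightarrow> 'm \<Rightarrow> 'm \<Rightarrow> 'm \<Rightarrow> bool" where
  "normal_lax_right_coaction_MonV C A B del eps \<gamma> \<tau> \<longleftrightarrow>
    (let AB = mten C A B; ABB = mten C AB B; ABBB = mten C ABB B;
         iA = idm C (mcar A); iB = idm C (mcar B) in
     mon1cell C A AB \<gamma> \<and>
     cmp C (tmr C iA eps) \<gamma> = iA \<and>
     mon2cell C A ABB (cmp C (tmr C \<gamma> iB) \<gamma>) (cmp C (tmr C iA del) \<gamma>) \<tau> \<and>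
     vcomp2 C ABBB (whisk_cod C (tmr C (tmr C iA del) iB) \<tau>)
                   (whisk_dom (tens2 C \<tau> (id2 B)) \<gamma>)
       = vcomp2 C ABBB (whisk_cod C (tmr C (tmr C iA iB) del) \<tau>)
                   (whisk_cod C (tmr C (tmr C \<gamma> iB) iB) \<tau>) \<and>
     whisk_cod C (tmr C (tmr C iA eps) iB) \<tau> = id2 AB \<and>
     whisk_cod C (tmr C (tmr C iA iB) eps) \<tau> = id2 AB)"

end

theory Submission
  imports Defs
begin

text \<open>Unfolding the 2-category Mon V, the two notions agree axiom by axiom: the lax
  coassociativity 2-cell, the cocycle condition and the normality conditions of a normal lax
  coaction are literally the corresponding conditions of a twisted coaction. The only
  extra requirement on the Mon V side is that the source and target of \<tau>, namely
  (\<gamma> \<otimes> 1)\<gamma> and (1 \<otimes> \<delta>)\<gamma>, be 1-cells, i.e. monoid morphisms A \<rightarrow> A \<otimes> B \<otimes> B. This holds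
  automatically: monoid morphisms are closed under composition and, by naturality of the
  braiding, under tensor product; and by the hexagon identities the tensor product of
  monoids is strictly associative, so 1 \<otimes> \<delta> : A \<otimes> B \<rightarrow> A \<otimes> (B \<otimes> B) is a monoid morphism
  into (A \<otimes> B) \<otimes> B.\<close>

definition mon_typed :: "('o,'m) bmcat \<Rightarrow> ('o,'m) mon \<Rightarrow> bool" where
  "mon_typed C X \<longleftrightarrow> src C (mmul X) = tob C (mcar X) (mcar X) \<and> tgt C (mmul X) = mcar X \<and>
     src C (meta X) = unt C \<and> tgt C (meta X) = mcar X"

definition mid_swap :: "('o,'m) bmcat \<Rightarrow> 'o \<Rightarrow> 'o \<Rightarrow> 'm" where
  "mid_swap C x y = tmr C (tmr C (idm C x) (brd C y x)) (idm C y)"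

lemma mten_simps [simp]:
  "mcar (mten C X Y) = tob C (mcar X) (mcar Y)"
  "mmul (mten C X Y) = cmp C (tmr C (mmul X) (mmul Y)) (mid_swap C (mcar X) (mcar Y))"
  "meta (mten C X Y) = tmr C (meta X) (meta Y)"
  by (simp_all add: mten_def mcar_def mmul_def meta_def mid_swap_def)

lemma mon_eqI: "mcar X = mcar Y \<Longrightarrow> mmul X = mmul Y \<Longrightarrow> meta X = meta Y \<Longrightarrow> X = Y"
  by (cases X; cases Y) (simp add: mcar_def mmul_def meta_def)

locale strict_braided_cat =
  fixes C :: "('o,'m) bmcat"
  assumes is_bmc: "is_bmc C"
begin

lemma src_idm [simp]: "src C (idm C a) = a"
  and tgt_idm [simp]: "tgt C (idm C a) = a"
  using is_bmc unfolding is_bmc_def by auto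

lemma src_cmp [simp]: "tgt C g = src C f \<Longrightarrow> src C (cmp C f g) = src C g"
  and tgt_cmp [simp]: "tgt C g = src C f \<Longrightarrow> tgt C (cmp C f g) = tgt C f"
  using is_bmc unfolding is_bmc_def by auto

lemma cmp_idm_right: "src C f = a \<Longrightarrow> cmp C f (idm C a) = f"
  and cmp_idm_left: "tgt C f = a \<Longrightarrow> cmp C (idm C a) f = f"
  using is_bmc unfolding is_bmc_def by auto

lemma cmp_assoc:
  "tgt C h = src C g \<Longrightarrow> tgt C g = src C f \<Longrightarrow> cmp C (cmp C f g) h = cmp C f (cmp C g h)"
  using is_bmc unfolding is_bmc_def by auto

lemma src_tmr [simp]: "src C (tmr C f g) = tob C (src C f) (src C g)"
  and tgt_tmr [simp]: "tgt C (tmr C f g) = tob C (tgt C f) (tgt C g)"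
  using is_bmc unfolding is_bmc_def by auto

lemma tmr_idm [simp]: "tmr C (idm C a) (idm C b) = idm C (tob C a b)"
  using is_bmc unfolding is_bmc_def by auto

lemma tmr_cmp:
  "tgt C f = src C f' \<Longrightarrow> tgt C g = src C g' \<Longrightarrow>
   tmr C (cmp C f' f) (cmp C g' g) = cmp C (tmr C f' g') (tmr C f g)"
  using is_bmc unfolding is_bmc_def by auto

lemma tob_assoc [simp]: "tob C (tob C a b) c = tob C a (tob C b c)"
  and tob_unit [simp]: "tob C (unt C) a = a" "tob C a (unt C) = a"
  and tmr_assoc [simp]: "tmr C (tmr C f g) h = tmr C f (tmr C g h)"
  and tmr_unit [simp]: "tmr C (idm C (unt C)) f = f" "tmr C f (idm C (unt C)) = f"
  using is_bmc unfolding is_bmc_def by auto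

lemma tmr_idm_tmr_idm [simp]: "tmr C (idm C a) (tmr C (idm C b) f) = tmr C (idm C (tob C a b)) f"
  by (metis tmr_assoc tmr_idm)

lemma src_brd [simp]: "src C (brd C a b) = tob C a b"
  and tgt_brd [simp]: "tgt C (brd C a b) = tob C b a"
  using is_bmc unfolding is_bmc_def by auto

lemma brd_natural:
  "cmp C (brd C (tgt C f) (tgt C g)) (tmr C f g) = cmp C (tmr C g f) (brd C (src C f) (src C g))"
  using is_bmc unfolding is_bmc_def by auto

lemma brd_tob_right: "brd C a (tob C b d) = cmp C (tmr C (idm C b) (brd C a d)) (tmr C (brd C a b) (idm C d))"
  and brd_tob_left: "brd C (tob C a b) d = cmp C (tmr C (brd C a d) (idm C b)) (tmr C (idm C a) (brd C b d))"
  using is_bmc unfolding is_bmc_def by auto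

lemma tmr_cmp_idm_left:
  "tgt C g = src C f \<Longrightarrow> tmr C (idm C a) (cmp C f g) = cmp C (tmr C (idm C a) f) (tmr C (idm C a) g)"
  using tmr_cmp[of "idm C a" "idm C a" g f] by (simp add: cmp_idm_right)

lemma tmr_cmp_idm_right:
  "tgt C g = src C f \<Longrightarrow> tmr C (cmp C f g) (idm C a) = cmp C (tmr C f (idm C a)) (tmr C g (idm C a))"
  using tmr_cmp[of g f "idm C a" "idm C a"] by (simp add: cmp_idm_right)

lemma tmr_cmp_left_after_right:
  "tmr C (cmp C f g) h = cmp C (tmr C f h) (tmr C g (idm C (src C h)))" if "tgt C g = src C f"
  using tmr_cmp[of g f "idm C (src C h)" h] that by (simp add: cmp_idm_right)

lemma tmr_cmp_right_after_left:
  "tmr C h (cmp C f g) = cmp C (tmr C h f) (tmr C (idm C (src C h)) g)" if "tgt C g = src C f"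
  using tmr_cmp[of "idm C (src C h)" h g f] that by (simp add: cmp_idm_right)

lemma tmr_eq_cmp_left_after_right:
  "cmp C (tmr C f (idm C (tgt C g))) (tmr C (idm C (src C f)) g) = tmr C f g"
  using tmr_cmp[of "idm C (src C f)" f g "idm C (tgt C g)"] by (simp add: cmp_idm_right cmp_idm_left)

lemma tmr_eq_cmp_right_after_left:
  "cmp C (tmr C (idm C (tgt C f)) g) (tmr C f (idm C (src C g))) = tmr C f g"
  using tmr_cmp[of f "idm C (tgt C f)" "idm C (src C g)" g] by (simp add: cmp_idm_right cmp_idm_left)

lemma src_mid_swap [simp]: "src C (mid_swap C x y) = tob C x (tob C y (tob C x y))"
  and tgt_mid_swap [simp]: "tgt C (mid_swap C x y) = tob C x (tob C x (tob C y y))"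
  by (simp_all add: mid_swap_def)

lemma mid_swap_natural:
  assumes f: "src C f = x" "tgt C f = x'" and g: "src C g = y" "tgt C g = y'"
  shows "cmp C (tmr C (tmr C f f) (tmr C g g)) (mid_swap C x y)
       = cmp C (mid_swap C x' y') (tmr C (tmr C f g) (tmr C f g))"
proof -
  have brd: "cmp C (tmr C f g) (brd C y x) = cmp C (brd C y' x') (tmr C g f)"
    using brd_natural[of g f] f g by simp
  have "cmp C (tmr C (tmr C f f) (tmr C g g)) (mid_swap C x y)
      = tmr C (cmp C f (idm C x)) (tmr C (cmp C (tmr C f g) (brd C y x)) (cmp C g (idm C y)))"
    using f g by (simp add: mid_swap_def tmr_cmp)
  also have "\<dots> = tmr C (cmp C (idm C x') f) (tmr C (cmp C (brd C y' x') (tmr C g f)) (cmp C (idm C y') g))"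
    using f g brd by (simp add: cmp_idm_right cmp_idm_left)
  also have "\<dots> = cmp C (mid_swap C x' y') (tmr C (tmr C f g) (tmr C f g))"
    using f g by (simp add: mid_swap_def tmr_cmp)
  finally show ?thesis .
qed

lemma mid_swap_assoc:
  "cmp C (tmr C (mid_swap C x y) (idm C (tob C z z))) (mid_swap C (tob C x y) z)
 = cmp C (tmr C (idm C (tob C x x)) (mid_swap C y z)) (mid_swap C x (tob C y z))"
proof -
  define common where
    "common = tmr C (idm C (tob C x y)) (tmr C (brd C z x) (idm C (tob C y z)))"
  define first_l where "first_l = tmr C (idm C (tob C x (tob C y x))) (tmr C (brd C z y) (idm C z))"
  define first_r where "first_r = tmr C (idm C x) (tmr C (brd C y x) (idm C (tob C z (tob C y z))))"
  have hex_l: "mid_swap C (tob C x y) z = cmp C first_l common"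
    unfolding mid_swap_def first_l_def common_def brd_tob_right[of z x y]
    by (simp add: tmr_cmp_idm_left tmr_cmp_idm_right)
  have hex_r: "mid_swap C x (tob C y z) = cmp C first_r common"
    unfolding mid_swap_def first_r_def common_def brd_tob_left[of y z x]
    by (simp add: tmr_cmp_idm_left tmr_cmp_idm_right)
  have "cmp C (tmr C (mid_swap C x y) (idm C (tob C z z))) first_l
      = tmr C (idm C x) (tmr C (brd C y x) (tmr C (brd C z y) (idm C z)))"
    using tmr_eq_cmp_left_after_right[of "tmr C (idm C x) (brd C y x)" "tmr C (brd C z y) (idm C z)"]
    by (simp add: mid_swap_def first_l_def)
  also have "\<dots> = cmp C (tmr C (idm C (tob C x x)) (mid_swap C y z)) first_r"
    using tmr_eq_cmp_right_after_left[of "tmr C (idm C x) (brd C y x)" "tmr C (brd C z y) (idm C z)"]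
    by (simp add: mid_swap_def first_r_def)
  finally have "cmp C (tmr C (mid_swap C x y) (idm C (tob C z z))) first_l
              = cmp C (tmr C (idm C (tob C x x)) (mid_swap C y z)) first_r" .
  then show ?thesis
    unfolding hex_l hex_r
    by (simp add: cmp_assoc[symmetric] first_l_def first_r_def common_def)
qed

lemma mon_typed_if_monoid: "is_monoid C X \<Longrightarrow> mon_typed C X"
  unfolding is_monoid_def mon_typed_def Let_def by auto

lemma mon_typed_mten: "mon_typed C X \<Longrightarrow> mon_typed C Y \<Longrightarrow> mon_typed C (mten C X Y)"
  unfolding mon_typed_def by simp

lemma mten_assoc:
  assumes "mon_typed C X" "mon_typed C Y" "mon_typed C Z"
  shows "mten C (mten C X Y) Z = mten C X (mten C Y Z)"
proof (rule mon_eqI)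
  define x y z where "x = mcar X" and "y = mcar Y" and "z = mcar Z"
  have t: "src C (mmul X) = tob C x x" "tgt C (mmul X) = x"
     "src C (mmul Y) = tob C y y" "tgt C (mmul Y) = y"
     "src C (mmul Z) = tob C z z" "tgt C (mmul Z) = z"
    using assms unfolding mon_typed_def x_def y_def z_def by auto
  let ?M = "tmr C (mmul X) (tmr C (mmul Y) (mmul Z))"
  have "cmp C (tmr C (cmp C (tmr C (mmul X) (mmul Y)) (mid_swap C x y)) (mmul Z)) (mid_swap C (tob C x y) z)
      = cmp C ?M (cmp C (tmr C (mid_swap C x y) (idm C (tob C z z))) (mid_swap C (tob C x y) z))"
    using t by (simp add: tmr_cmp_left_after_right cmp_assoc)
  also have "\<dots> = cmp C ?M (cmp C (tmr C (idm C (tob C x x)) (mid_swap C y z)) (mid_swap C x (tob C y z)))"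
    by (simp only: mid_swap_assoc)
  also have "\<dots> = cmp C (tmr C (mmul X) (cmp C (tmr C (mmul Y) (mmul Z)) (mid_swap C y z))) (mid_swap C x (tob C y z))"
    using t by (simp add: tmr_cmp_right_after_left cmp_assoc)
  finally show "mmul (mten C (mten C X Y) Z) = mmul (mten C X (mten C Y Z))"
    by (simp add: x_def y_def z_def)
qed simp_all

lemma monoid_hom_idm: "mon_typed C X \<Longrightarrow> monoid_hom C X X (idm C (mcar X))"
  unfolding mon_typed_def monoid_hom_def by (simp add: cmp_idm_right cmp_idm_left)

lemma monoid_hom_cmp:
  assumes "mon_typed C X" "mon_typed C Y" "mon_typed C Z"
    and f: "monoid_hom C X Y f" and g: "monoid_hom C Y Z g"
  shows "monoid_hom C X Z (cmp C g f)"
proof -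
  note t = assms(1-3)[unfolded mon_typed_def]
  note f = f[unfolded monoid_hom_def] and g = g[unfolded monoid_hom_def]
  have "cmp C (cmp C g f) (mmul X) = cmp C g (cmp C (mmul Y) (tmr C f f))"
    using t f g by (simp add: cmp_assoc)
  also have "\<dots> = cmp C (mmul Z) (cmp C (tmr C g g) (tmr C f f))"
    using t f g by (simp add: cmp_assoc[symmetric])
  also have "\<dots> = cmp C (mmul Z) (tmr C (cmp C g f) (cmp C g f))"
    using f g by (simp add: tmr_cmp)
  finally show ?thesis
    using t f g unfolding monoid_hom_def by (simp add: cmp_assoc)
qed

lemma monoid_hom_tmr:
  assumes "mon_typed C X" "mon_typed C Y" "mon_typed C X'" "mon_typed C Y'"
    and f: "monoid_hom C X X' f" and g: "monoid_hom C Y Y' g"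
  shows "monoid_hom C (mten C X Y) (mten C X' Y') (tmr C f g)"
proof -
  note t = assms(1-4)[unfolded mon_typed_def]
  note f = f[unfolded monoid_hom_def] and g = g[unfolded monoid_hom_def]
  let ?\<sigma> = "mid_swap C (mcar X) (mcar Y)" and ?\<sigma>' = "mid_swap C (mcar X') (mcar Y')"
  have mul: "cmp C (tmr C f g) (tmr C (mmul X) (mmul Y))
           = cmp C (tmr C (mmul X') (mmul Y')) (tmr C (tmr C f f) (tmr C g g))"
  proof -
    have "cmp C (tmr C f g) (tmr C (mmul X) (mmul Y)) = tmr C (cmp C f (mmul X)) (cmp C g (mmul Y))"
      using t f g by (subst tmr_cmp) simp_all
    also have "\<dots> = tmr C (cmp C (mmul X') (tmr C f f)) (cmp C (mmul Y') (tmr C g g))"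
      using f g by simp
    also have "\<dots> = cmp C (tmr C (mmul X') (mmul Y')) (tmr C (tmr C f f) (tmr C g g))"
      using t f g by (subst tmr_cmp) simp_all
    finally show ?thesis .
  qed
  have "cmp C (tmr C f g) (cmp C (tmr C (mmul X) (mmul Y)) ?\<sigma>)
      = cmp C (cmp C (tmr C f g) (tmr C (mmul X) (mmul Y))) ?\<sigma>"
    using t f g by (simp add: cmp_assoc)
  also have "\<dots> = cmp C (tmr C (mmul X') (mmul Y')) (cmp C (tmr C (tmr C f f) (tmr C g g)) ?\<sigma>)"
    unfolding mul using t f g by (subst cmp_assoc) simp_all
  also have "\<dots> = cmp C (tmr C (mmul X') (mmul Y')) (cmp C ?\<sigma>' (tmr C (tmr C f g) (tmr C f g)))"
    using f g by (simp only: mid_swap_natural)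
  also have "\<dots> = cmp C (cmp C (tmr C (mmul X') (mmul Y')) ?\<sigma>') (tmr C (tmr C f g) (tmr C f g))"
    using t f g by (subst cmp_assoc) simp_all
  finally show ?thesis
    using t f g unfolding monoid_hom_def by (simp add: tmr_cmp[symmetric])
qed

lemma coaction_composites_monoid_hom:
  assumes A: "is_monoid C A" and B: "is_bimonoid C B del eps"
    and \<gamma>: "monoid_hom C A (mten C A B) \<gamma>"
  shows "monoid_hom C A (mten C (mten C A B) B) (cmp C (tmr C \<gamma> (idm C (mcar B))) \<gamma>)"
    and "monoid_hom C A (mten C (mten C A B) B) (cmp C (tmr C (idm C (mcar A)) del) \<gamma>)"
proof -
  have tA: "mon_typed C A" and tB: "mon_typed C B"
    using A B mon_typed_if_monoid unfolding is_bimonoid_def by blast+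
  have tAB: "mon_typed C (mten C A B)" and tABB: "mon_typed C (mten C (mten C A B) B)"
    and tBB: "mon_typed C (mten C B B)"
    using tA tB mon_typed_mten by blast+
  have del: "monoid_hom C B (mten C B B) del"
    using B unfolding is_bimonoid_def by blast
  show "monoid_hom C A (mten C (mten C A B) B) (cmp C (tmr C \<gamma> (idm C (mcar B))) \<gamma>)"
    by (rule monoid_hom_cmp[OF tA tAB tABB \<gamma> monoid_hom_tmr[OF tA tB tAB tB \<gamma> monoid_hom_idm[OF tB]]])
  have "monoid_hom C (mten C A B) (mten C A (mten C B B)) (tmr C (idm C (mcar A)) del)"
    by (rule monoid_hom_tmr[OF tA tB tA tBB monoid_hom_idm[OF tA] del])
  then have "monoid_hom C (mten C A B) (mten C (mten C A B) B) (tmr C (idm C (mcar A)) del)"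
    by (simp only: mten_assoc[OF tA tB tB])
  then show "monoid_hom C A (mten C (mten C A B) B) (cmp C (tmr C (idm C (mcar A)) del) \<gamma>)"
    by (rule monoid_hom_cmp[OF tA tAB tABB \<gamma>])
qed

end

theorem proposition4p5:
  fixes C :: "('o,'m) bmcat" and A B :: "('o,'m) mon" and del eps \<gamma> \<tau> :: 'm
  assumes "is_bmc C"
    and "is_monoid C A"
    and "is_bimonoid C B del eps"
    and "src C \<gamma> = mcar A" and "tgt C \<gamma> = tob C (mcar A) (mcar B)"
    and "src C \<tau> = unt C" and "tgt C \<tau> = tob C (tob C (mcar A) (mcar B)) (mcar B)"
  shows "twisted_right_coaction C A B del eps \<gamma> \<tau> \<longleftrightarrow>
         normal_lax_right_coaction_MonV C A B del eps \<gamma> \<tau>"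
proof -
  interpret strict_braided_cat C by unfold_locales (rule assms(1))
  show ?thesis
    unfolding twisted_right_coaction_def normal_lax_right_coaction_MonV_def Let_def
      mon1cell_def mon2cell_def vcomp2_def whisk_cod_def whisk_dom_def tens2_def id2_def
    using coaction_composites_monoid_hom[OF assms(2,3)] assms(6,7) by auto
qed

end
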